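(* Let $n$ be a positive integer and let $a_1,a_2,\ldots,a_n$ be strictly positive real numbers. Let $A_R(n)=[A_R(i,j)]_{i,j=1}^n$ be the matrix with $A_R(i,j)=1$ if $j=1$ and $i\neq 1$; $A_R(i,j)=a_i$ if $i\mid j$; and $A_R(i,j)=0$ otherwise. Then \[ \det(A_R(n))=\left(\prod_{j=1}^n a_j\right)\left[1+\sum_{k=2}^{n}\frac{\mu(k)}{a_k}\right]. \]
   Context: $\mu$ denotes the Möbius function: $\mu(1)=1$, $\mu(j)=0$ if $j$ has a repeated prime factor, and $\mu(j)=(-1)^k$ if $j$ is a product of $k$ distinct primes. *)

theory Defs
  imports "Jordan_Normal_Form.Determinant" "HOL-Computational_Algebra.Squarefree"
begin

definition moebius_mu :: "nat \<Rightarrow> int" where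
  "moebius_mu j = (if squarefree j then (-1) ^ card (prime_factors j) else 0)"

definition A_R_entry :: "(nat \<Rightarrow> real) \<Rightarrow> nat \<Rightarrow> nat \<Rightarrow> real" where
  "A_R_entry a i j = (if j = 1 \<and> i \<noteq> 1 then 1 else if i dvd j then a i else 0)"

text \<open>The n x n matrix A_R(n) (Jordan_Normal_Form matrices are 0-indexed).\<close>
definition A_R :: "(nat \<Rightarrow> real) \<Rightarrow> nat \<Rightarrow> real mat" where
  "A_R a n = mat n n (\<lambda>(i, j). A_R_entry a (i + 1) (j + 1))"

end

theory Submission
  imports Defs
begin

text \<open>Replace the first row of A_R(n) by the combination of all rows with coefficients
  c_k = a_1 mu(k) / a_k; as c_1 = 1, the determinant is unchanged. In a column j >= 2 only the
  rows k dividing j contribute, each with c_k a_k = a_1 mu(k), so the new entry is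
  a_1 sum_{d | j} mu(d) = 0, while column 1 becomes a_1 (1 + sum_{k >= 2} mu(k) / a_k).
  Expanding along the new first row leaves the minor on rows and columns 2..n, which is upper
  triangular with diagonal a_2, ..., a_n.\<close>

lemma sum_minus_one_power_card_Pow:
  assumes "finite P" "P \<noteq> {}"
  shows "(\<Sum>S\<in>Pow P. (-1::'a::ring_1) ^ card S) = 0"
proof (rule sum_alternating_cancels)
  have "card {T. T \<subseteq> P \<and> {} \<subseteq> T \<and> even (card T)} = card {T. T \<subseteq> P \<and> {} \<subseteq> T \<and> odd (card T)}"
    using assms by (intro card_subsupersets_even_odd) auto
  then show "card {S. S \<in> Pow P \<and> even (card S)} = card {S. S \<in> Pow P \<and> odd (card S)}"
    by simp
qed (use assms in simp)

lemma prime_factors_prod_primes: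
  assumes "finite S" "\<And>p. p \<in> S \<Longrightarrow> prime (p::nat)"
  shows "prime_factors (\<Prod>S) = S"
proof -
  have "0 \<notin> id ` S" using assms by force
  then show ?thesis
    using prime_factors_prod[OF assms(1), of id] assms by (auto simp: prime_prime_factors)
qed

lemma squarefree_prod_prime_factors:
  assumes "squarefree (d::nat)"
  shows "\<Prod>(prime_factors d) = d"
proof -
  have "d \<noteq> 0" using assms by (metis not_squarefree_0)
  then have "\<forall>p\<in>prime_factors d. multiplicity p d = 1"
    using assms squarefree_factorial_semiring' by blast
  then show ?thesis
    using prod_prime_factors[OF \<open>d \<noteq> 0\<close>] by (simp cong: prod.cong)
qed

lemma squarefree_divisors_eq_Prod_Pow_prime_factors:
  assumes "(m::nat) \<noteq> 0"
  shows "{d. d dvd m \<and> squarefree d} = Prod ` Pow (prime_factors m)"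
proof (intro equalityI subsetI)
  fix d assume "d \<in> {d. d dvd m \<and> squarefree d}"
  then have "d dvd m" "squarefree d" by auto
  then have "prime_factors d \<subseteq> prime_factors m" "d = \<Prod>(prime_factors d)"
    using assms dvd_prime_factors[of m d] by (auto simp: squarefree_prod_prime_factors)
  then show "d \<in> Prod ` Pow (prime_factors m)" by blast
next
  fix d assume "d \<in> Prod ` Pow (prime_factors m)"
  then obtain S where S: "S \<subseteq> prime_factors m" and d: "d = \<Prod>S" by auto
  have primes: "prime p" if "p \<in> S" for p
    using S that by auto
  have "squarefree d"
    unfolding d by (intro squarefree_prod_coprime) (auto simp: primes squarefree_prime primes_coprime)
  moreover have "d dvd m"
  proof -
    have "\<Prod>S dvd \<Prod>(prime_factors m)"
      using S by (intro prod_dvd_prod_subset) auto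
    also have "\<dots> dvd (\<Prod>p\<in>prime_factors m. p ^ multiplicity p m)"
      by (intro prod_dvd_prod) (auto simp: prime_factors_multiplicity)
    also have "\<dots> = m"
      using prod_prime_factors[OF assms] by simp
    finally show ?thesis unfolding d .
  qed
  ultimately show "d \<in> {d. d dvd m \<and> squarefree d}" by simp
qed

lemma sum_moebius_mu_divisors:
  assumes "(m::nat) > 1"
  shows "(\<Sum>d | d dvd m. moebius_mu d) = 0"
proof -
  have "m \<noteq> 0" using assms by simp
  have "(\<Sum>d | d dvd m. moebius_mu d)
      = (\<Sum>d | d dvd m \<and> squarefree d. (-1) ^ card (prime_factors d))"
    using \<open>m \<noteq> 0\<close> by (intro sum.mono_neutral_cong_right) (auto simp: moebius_mu_def)
  also have "\<dots> = (\<Sum>d\<in>Prod ` Pow (prime_factors m). (-1) ^ card (prime_factors d))"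
    by (simp only: squarefree_divisors_eq_Prod_Pow_prime_factors[OF \<open>m \<noteq> 0\<close>])
  also have "\<dots> = (\<Sum>S\<in>Pow (prime_factors m). (-1) ^ card S)"
  proof (rule sum.reindex_cong)
    show "inj_on Prod (Pow (prime_factors m))"
      by (rule inj_on_inverseI[where g = prime_factors])
        (auto intro!: prime_factors_prod_primes dest: finite_subset)
  qed (auto intro!: arg_cong[where f = "\<lambda>S. (-1) ^ card S"] prime_factors_prod_primes dest: finite_subset)
  also have "\<dots> = 0"
  proof (rule sum_minus_one_power_card_Pow)
    obtain p where "prime p" "p dvd m" using assms prime_factor_nat[of m] by auto
    then show "prime_factors m \<noteq> {}" using \<open>m \<noteq> 0\<close> by (auto simp: prime_factors_dvd)
  qed simp
  finally show ?thesis .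
qed

lemma det_replace_first_row_by_combination:
  fixes A :: "'a::comm_ring_1 mat"
  assumes A: "A \<in> carrier_mat n n" and "0 < n"
  shows "det (mat n n (\<lambda>(i, j). if i = 0 then \<Sum>k<n. c k * A $$ (k, j) else A $$ (i, j)))
    = c 0 * det A" (is "det ?B = _")
proof -
  define L where "L = mat n n (\<lambda>(i, j). if i = 0 then c j else if i = j then 1 else (0::'a))"
  have L: "L \<in> carrier_mat n n" unfolding L_def by simp
  have "det L = prod_list (diag_mat L)"
    by (rule det_upper_triangular[OF _ L]) (auto simp: L_def upper_triangular_def)
  also have "\<dots> = c 0"
    using \<open>0 < n\<close> by (simp add: prod_list_diag_prod L_def prod.atLeast_Suc_lessThan)
  finally have "det L = c 0" .
  moreover have "L * A = ?B"
  proof (rule eq_matI)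
    fix i j assume "i < dim_row ?B" "j < dim_col ?B"
    then have ij: "i < n" "j < n" by auto
    then have "(L * A) $$ (i, j) = (\<Sum>k<n. L $$ (i, k) * A $$ (k, j))"
      using A L by (simp add: scalar_prod_def lessThan_atLeast0)
    also have "\<dots> = (\<Sum>k<n. if i = 0 then c k * A $$ (k, j) else if k = i then A $$ (k, j) else 0)"
      using ij by (intro sum.cong) (auto simp: L_def)
    also have "\<dots> = ?B $$ (i, j)"
      using ij by simp
    finally show "(L * A) $$ (i, j) = ?B $$ (i, j)" .
  qed (use A L in auto)
  ultimately show ?thesis
    using det_mult[OF L A] by simp
qed

lemma det_first_row_zero_but_corner:
  fixes A :: "'a::comm_ring_1 mat"
  assumes A: "A \<in> carrier_mat n n" and "0 < n"
    and zero: "\<And>j. 0 < j \<Longrightarrow> j < n \<Longrightarrow> A $$ (0, j) = 0"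
  shows "det A = A $$ (0, 0) * det (mat_delete A 0 0)"
proof -
  have "det A = (\<Sum>j<n. A $$ (0, j) * cofactor A 0 j)"
    using laplace_expansion_row[OF A \<open>0 < n\<close>] .
  also have "\<dots> = (\<Sum>j<n. if j = 0 then A $$ (0, 0) * cofactor A 0 0 else 0)"
    by (rule sum.cong) (auto simp: zero)
  also have "\<dots> = A $$ (0, 0) * det (mat_delete A 0 0)"
    using \<open>0 < n\<close> by (simp add: cofactor_def)
  finally show ?thesis .
qed

lemma det_by_first_row_combination:
  fixes A :: "'a::comm_ring_1 mat"
  assumes A: "A \<in> carrier_mat n n" and "0 < n"
    and zero: "\<And>j. 0 < j \<Longrightarrow> j < n \<Longrightarrow> (\<Sum>k<n. c k * A $$ (k, j)) = 0"
  shows "c 0 * det A = (\<Sum>k<n. c k * A $$ (k, 0)) * det (mat_delete A 0 0)"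
proof -
  define B where "B = mat n n (\<lambda>(i, j). if i = 0 then \<Sum>k<n. c k * A $$ (k, j) else A $$ (i, j))"
  have "c 0 * det A = det B"
    unfolding B_def using det_replace_first_row_by_combination[OF A \<open>0 < n\<close>] by simp
  also have "\<dots> = B $$ (0, 0) * det (mat_delete B 0 0)"
    by (rule det_first_row_zero_but_corner[of _ n]) (use \<open>0 < n\<close> zero in \<open>auto simp: B_def\<close>)
  also have "mat_delete B 0 0 = mat_delete A 0 0"
    using A by (auto simp: B_def mat_delete_def)
  finally show ?thesis
    using \<open>0 < n\<close> by (simp add: B_def)
qed

lemma A_R_carrier_mat: "A_R a n \<in> carrier_mat n n"
  by (simp add: A_R_def)

lemma det_A_R_delete_first: "det (mat_delete (A_R a n) 0 0) = (\<Prod>k = 2..n. a k)"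
proof -
  let ?M = "mat_delete (A_R a n) 0 0"
  have entries: "?M $$ (i, j) = A_R_entry a (i + 2) (j + 2)" if "i < n - 1" "j < n - 1" for i j
    using that by (simp add: mat_delete_def A_R_def)
  have dim: "dim_row ?M = n - 1"
    by (simp add: A_R_def)
  have "det ?M = prod_list (diag_mat ?M)"
  proof (rule det_upper_triangular)
    show "upper_triangular ?M"
    proof (rule upper_triangularI)
      fix i j assume "j < i" "i < dim_row ?M"
      then have "i < n - 1" "j < n - 1"
        by (simp_all add: A_R_def)
      moreover from \<open>j < i\<close> have "\<not> i + 2 dvd j + 2"
        by (auto dest: dvd_imp_le)
      ultimately show "?M $$ (i, j) = 0"
        by (simp add: entries A_R_entry_def)
    qed
  qed (auto simp: A_R_def)
  also have "\<dots> = (\<Prod>i = 0..<n - 1. a (i + 2))"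
    unfolding prod_list_diag_prod dim by (intro prod.cong) (simp_all add: entries A_R_entry_def)
  also have "\<dots> = (\<Prod>k = 0 + 2..<n - 1 + 2. a k)"
    by (rule prod.shift_bounds_nat_ivl[symmetric])
  also have "\<dots> = (\<Prod>k = 2..n. a k)"
    by (cases n) (simp_all add: atLeastLessThanSuc_atLeastAtMost numeral_2_eq_2)
  finally show ?thesis .
qed

lemma A_R_moebius_combination_first_col:
  assumes "0 < n" and "a 1 \<noteq> 0"
  shows "(\<Sum>k<n. a 1 * of_int (moebius_mu (Suc k)) / a (Suc k) * A_R a n $$ (k, 0))
    = a 1 * (1 + (\<Sum>k = 2..n. of_int (moebius_mu k) / a k))"
proof -
  let ?g = "\<lambda>k. a 1 * of_int (moebius_mu k) / a k * A_R_entry a k 1"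
  have "(\<Sum>k<n. a 1 * of_int (moebius_mu (Suc k)) / a (Suc k) * A_R a n $$ (k, 0))
      = (\<Sum>k<n. ?g (Suc k))"
    by (intro sum.cong) (auto simp: A_R_def)
  also have "\<dots> = (\<Sum>k = 1..n. ?g k)"
    by (simp add: sum.atLeast1_atMost_eq)
  also have "\<dots> = ?g 1 + (\<Sum>k = 2..n. ?g k)"
    using \<open>0 < n\<close> sum.atLeast_Suc_atMost[of 1 n ?g] by (simp add: numeral_2_eq_2)
  also have "\<dots> = a 1 * (1 + (\<Sum>k = 2..n. of_int (moebius_mu k) / a k))"
    using \<open>a 1 \<noteq> 0\<close> by (simp add: A_R_entry_def moebius_mu_def distrib_left sum_distrib_left)
  finally show ?thesis .
qed

lemma A_R_moebius_combination_other_col: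
  assumes "0 < j" "j < n" and nonzero: "\<And>k. 1 \<le> k \<Longrightarrow> k \<le> n \<Longrightarrow> a k \<noteq> 0"
  shows "(\<Sum>k<n. a 1 * of_int (moebius_mu (Suc k)) / a (Suc k) * A_R a n $$ (k, j)) = 0"
proof -
  have "(\<Sum>k<n. a 1 * of_int (moebius_mu (Suc k)) / a (Suc k) * A_R a n $$ (k, j))
      = a 1 * (\<Sum>k<n. if Suc k dvd Suc j then of_int (moebius_mu (Suc k)) else 0)"
    unfolding sum_distrib_left
    by (intro sum.cong) (use assms in \<open>auto simp: A_R_def A_R_entry_def\<close>)
  also have "(\<Sum>k<n. if Suc k dvd Suc j then of_int (moebius_mu (Suc k)) else 0)
      = (\<Sum>d = 1..n. if d dvd Suc j then of_int (moebius_mu d) else 0 :: real)"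
    by (simp add: sum.atLeast1_atMost_eq)
  also have "\<dots> = (\<Sum>d \<in> {d \<in> {1..n}. d dvd Suc j}. of_int (moebius_mu d))"
    by (rule sum.inter_filter[symmetric]) simp
  also have "{d \<in> {1..n}. d dvd Suc j} = {d. d dvd Suc j}"
    using \<open>j < n\<close> by (auto simp: Suc_le_eq intro: dvd_pos_nat dest: dvd_imp_le)
  also have "(\<Sum>d | d dvd Suc j. of_int (moebius_mu d) :: real) = 0"
    using sum_moebius_mu_divisors[of "Suc j"] \<open>0 < j\<close> by (simp flip: of_int_sum)
  finally show ?thesis by simp
qed

theorem theorem6:
  fixes n :: nat and a :: "nat \<Rightarrow> real"
  assumes "n \<ge> 1"
    and "\<And>i. 1 \<le> i \<Longrightarrow> i \<le> n \<Longrightarrow> a i > 0"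
  shows "det (A_R a n) =
    (\<Prod>j = 1..n. a j) * (1 + (\<Sum>k = 2..n. of_int (moebius_mu k) / a k))"
proof -
  have nonzero: "a k \<noteq> 0" if "1 \<le> k" "k \<le> n" for k
    using assms(2)[OF that] by simp
  have "0 < n" "a 1 \<noteq> 0"
    using assms(1) nonzero[of 1] by simp_all
  let ?c = "\<lambda>k. a 1 * of_int (moebius_mu (Suc k)) / a (Suc k)"
  have "?c 0 = 1"
    using \<open>a 1 \<noteq> 0\<close> by (simp add: moebius_mu_def)
  moreover have "?c 0 * det (A_R a n)
      = (\<Sum>k<n. ?c k * A_R a n $$ (k, 0)) * det (mat_delete (A_R a n) 0 0)"
    by (rule det_by_first_row_combination[OF A_R_carrier_mat \<open>0 < n\<close>])
      (rule A_R_moebius_combination_other_col[OF _ _ nonzero])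
  ultimately have "det (A_R a n) = (\<Sum>k<n. ?c k * A_R a n $$ (k, 0)) * det (mat_delete (A_R a n) 0 0)"
    by simp
  also have "\<dots> = a 1 * (1 + (\<Sum>k = 2..n. of_int (moebius_mu k) / a k)) * (\<Prod>k = 2..n. a k)"
    by (simp only: det_A_R_delete_first
        A_R_moebius_combination_first_col[OF \<open>0 < n\<close>, of a, OF \<open>a 1 \<noteq> 0\<close>])
  also have "\<dots> = (\<Prod>j = 1..n. a j) * (1 + (\<Sum>k = 2..n. of_int (moebius_mu k) / a k))"
    using \<open>0 < n\<close> by (simp add: prod.atLeast_Suc_atMost numeral_2_eq_2)
  finally show ?thesis .
qed

end
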